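(* There exist $p\in(1,\infty)$ and $M<\infty$ such that for every menu $(R_\theta,p_\theta)_{\theta\in\Theta}$ that is individually rational and incentive compatible, the map $u:\Theta\to\mathbb R^2$, $u(\theta)=\big(U_\theta(R_\theta,p_\theta),\int_\Theta V_\vartheta(R_\vartheta,p_\vartheta)\,d\mu(\vartheta)\big)$, belongs to the Bochner space $L^p(\Theta,\mu;\mathbb R^2)$ and $\|u\|_{L^p}\le M$.
   Context: Setting (Yaari dual-utility insurance model). $(S,\Sigma,\mathbb P)$ is a probability space. Types: $\Theta=[\underline\theta,\bar\theta]$ with Borel $\sigma$-algebra and a probability measure $\mu$ with a Lebesgue density $q$. Fix $\bar L<\infty$. For each $\theta$ the type-$\theta$ agent faces a loss $L_\theta$ (bounded, $\Sigma$-measurable, values in $[0,\bar L]$) with continuous distribution function $F_\theta(l)=\mathbb P(L_\theta\le l)$. Retention functions: $\mathcal R=\{R:[0,\bar L]\to[0,\bar L]: R(0)=0,\ 0\le\partial R(l)/\partial l\le1\}$. A menu is a family $(R_\theta,p_\theta)_{\theta\in\Theta}$ with $R_\theta\in\mathcal R$, $p_\theta\in\mathbb R$. A distortion function is a nondecreasing $g:[0,1]\to[0,1]$ with $g(0)=0,g(1)=1$; type $\theta$ has distortion $g_\theta$, the insurer $g^{In}$. Utilities: $U_\theta(R,p)=-p-\int_0^{\bar L}[1-g_\theta(F_\theta(l))]\frac{\partial R(l)}{\partial l}dl$, $V_\theta(R,p)=p-\int_0^{\bar L}[1-g^{In}(F_\theta(l))](1-\frac{\partial R(l)}{\partial l})dl$,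 no-insurance utility $U_\theta(L_\theta,0)=-\int_0^{\bar L}[1-g_\theta(F_\theta(l))]dl$. Throughout, for every menu the maps $\theta\mapsto U_\theta(R_\theta,p_\theta)$, $\theta\mapsto V_\theta(R_\theta,p_\theta)$ lie in $L^1(\Theta,\mu)$. Individually rational: (P1) $U_\theta(R_\theta,p_\theta)\ge U_\theta(L_\theta,0)$ for all $\theta$ and (P2) $\int_\Theta V_\theta(R_\theta,p_\theta)d\mu\ge0$. Incentive compatible: $U_\theta(R_\theta,p_\theta)\ge U_\theta(R_{\theta'},p_{\theta'})$ for all $\theta,\theta'$. $L^p(\Theta,\mu;\mathbb R^2)$ is the Bochner space of strongly measurable $u$ with $\|u\|_{L^p}=(\int_\Theta\|u(\theta)\|^p d\mu)^{1/p}<\infty$, $\|\cdot\|$ the Euclidean norm. *)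

theory Defs
  imports "HOL-Probability.Probability"
begin

definition cdf :: "'a measure \<Rightarrow> ('a \<Rightarrow> real) \<Rightarrow> real \<Rightarrow> real" where
  "cdf P X l = measure P {s \<in> space P. X s \<le> l}"

definition distortion :: "(real \<Rightarrow> real) \<Rightarrow> bool" where
  "distortion g \<longleftrightarrow> mono_on {0..1} g \<and> g ` {0..1} \<subseteq> {0..1} \<and> g 0 = 0 \<and> g 1 = 1"

definition retention :: "real \<Rightarrow> (real \<Rightarrow> real) \<Rightarrow> bool" where
  "retention Lbar R \<longleftrightarrow> R 0 = 0 \<and> R ` {0..Lbar} \<subseteq> {0..Lbar} \<and>
     (\<forall>l\<in>{0..Lbar}. \<exists>d. (R has_real_derivative d) (at l within {0..Lbar}) \<and> 0 \<le> d \<and> d \<le> 1)"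

definition rderiv :: "real \<Rightarrow> (real \<Rightarrow> real) \<Rightarrow> real \<Rightarrow> real" where
  "rderiv Lbar R l = (SOME d. (R has_real_derivative d) (at l within {0..Lbar}))"

definition Uag :: "real \<Rightarrow> (real \<Rightarrow> real) \<Rightarrow> (real \<Rightarrow> real) \<Rightarrow> (real \<Rightarrow> real) \<Rightarrow> real \<Rightarrow> real" where
  "Uag Lbar g F R pr = - pr - (LINT l:{0..Lbar}|lborel. (1 - g (F l)) * rderiv Lbar R l)"

definition Vins :: "real \<Rightarrow> (real \<Rightarrow> real) \<Rightarrow> (real \<Rightarrow> real) \<Rightarrow> (real \<Rightarrow> real) \<Rightarrow> real \<Rightarrow> real" where
  "Vins Lbar gIn F R pr = pr - (LINT l:{0..Lbar}|lborel. (1 - gIn (F l)) * (1 - rderiv Lbar R l))"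

text \<open>No-insurance utility U_theta(L_theta,0).\<close>
definition Unone :: "real \<Rightarrow> (real \<Rightarrow> real) \<Rightarrow> (real \<Rightarrow> real) \<Rightarrow> real" where
  "Unone Lbar g F = - (LINT l:{0..Lbar}|lborel. 1 - g (F l))"

end

theory Submission imports Defs begin

text \<open>
  Every premium of an individually rational and incentive compatible menu lies in
  [-Lbar, Lbar]: individual rationality of the agent caps it from above, while
  incentive compatibility lets no premium undercut another by more than Lbar, so a
  premium below -Lbar would push all premiums, and with them the insurer's
  expected utility, below zero.  Both components of the utility vector are then
  bounded by Lbar, so it lies in every L^p on the probability space of types.
\<close>

lemma rderiv_retention_bounds:
  assumes R: "retention Lbar R" and l: "l \<in> {0<..<Lbar}"
  shows "rderiv Lbar R l \<in> {0..1}"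
proof -
  from l have l': "l \<in> {0..Lbar}" and "0 < Lbar" by auto
  from R l' obtain d where d: "(R has_real_derivative d) (at l within {0..Lbar})" "0 \<le> d" "d \<le> 1"
    unfolding retention_def by blast
  have "(R has_real_derivative rderiv Lbar R l) (at l within {0..Lbar})"
    unfolding rderiv_def using d(1) by (rule someI)
  with d(1) \<open>0 < Lbar\<close> l' have "rderiv Lbar R l = d"
    using vector_derivative_unique_within_closed_interval
    by (fastforce simp: has_real_derivative_iff_has_vector_derivative)
  with d show ?thesis by simp
qed

text \<open>
  The integrand is only controlled on the open interval: for Lbar = 0 the derivative
  within {0..Lbar} is not unique.  It need not be integrable either, in which case
  the integral is 0.
\<close>
lemma set_integral_Icc_unit_bounds:
  fixes h :: "real \<Rightarrow> real"
  assumes Lbar: "0 \<le> Lbar" and h: "\<And>l. l \<in> {0<..<Lbar} \<Longrightarrow> h l \<in> {0..1}"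
  shows "(LINT l:{0..Lbar}|lborel. h l) \<in> {0..Lbar}"
proof -
  have ae: "AE l in lborel. l \<noteq> 0 \<and> l \<noteq> Lbar"
    using AE_lborel_singleton[of 0] AE_lborel_singleton[of Lbar] by eventually_elim auto
  then have ae_lower: "AE l in lborel. 0 \<le> indicator {0..Lbar} l *\<^sub>R h l"
    by eventually_elim (use h in \<open>auto simp: indicator_def\<close>)
  from ae have ae_upper: "AE l in lborel. indicator {0..Lbar} l *\<^sub>R h l \<le> indicator {0..Lbar} l"
    by eventually_elim (use h in \<open>auto simp: indicator_def\<close>)
  have "0 \<le> (LINT l:{0..Lbar}|lborel. h l)"
    unfolding set_lebesgue_integral_def by (rule integral_nonneg_AE[OF ae_lower])
  moreover have "(LINT l:{0..Lbar}|lborel. h l) \<le> Lbar"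
  proof (cases "integrable lborel (\<lambda>l. indicator {0..Lbar} l *\<^sub>R h l)")
    case True
    have "(LINT l:{0..Lbar}|lborel. h l) \<le> integral\<^sup>L lborel (indicator {0..Lbar} :: real \<Rightarrow> real)"
      unfolding set_lebesgue_integral_def
      by (rule integral_mono_AE[OF True _ ae_upper]) (use Lbar in \<open>simp add: integrable_indicator_iff\<close>)
    also have "\<dots> = Lbar" using Lbar by simp
    finally show ?thesis .
  next
    case False
    then show ?thesis using Lbar by (simp add: set_lebesgue_integral_def not_integrable_integral_eq)
  qed
  ultimately show ?thesis by simp
qed

context prob_space
begin

context
  fixes f :: "'a \<Rightarrow> 'b :: real_normed_vector" and B p :: real
  assumes f: "f \<in> borel_measurable M" and B: "\<And>x. x \<in> space M \<Longrightarrow> norm (f x) \<le> B"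
    and p: "0 < p"
begin

lemma norm_powr_le_bound_powr: "x \<in> space M \<Longrightarrow> norm (f x) powr p \<le> B powr p"
  using B p by (intro powr_mono2) auto

lemma integrable_norm_powr_of_bounded: "integrable M (\<lambda>x. norm (f x) powr p)"
proof (rule integrable_const_bound)
  show "AE x in M. norm (norm (f x) powr p) \<le> B powr p"
    using norm_powr_le_bound_powr by (intro AE_I2) simp
  show "(\<lambda>x. norm (f x) powr p) \<in> borel_measurable M" using f by measurable
qed

lemma Lp_norm_le_of_bounded: "(\<integral>x. norm (f x) powr p \<partial>M) powr (1 / p) \<le> B"
proof -
  obtain x where "x \<in> space M" using not_empty by blast
  with B have "0 \<le> B" by (meson norm_ge_zero order_trans)
  have "(\<integral>x. norm (f x) powr p \<partial>M) \<le> B powr p"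
    using norm_powr_le_bound_powr
    by (intro integral_le_const[OF integrable_norm_powr_of_bounded] AE_I2)
  then have "(\<integral>x. norm (f x) powr p \<partial>M) powr (1 / p) \<le> (B powr p) powr (1 / p)"
    using p by (intro powr_mono2) auto
  also have "\<dots> = B" using p \<open>0 \<le> B\<close> by (simp add: powr_powr)
  finally show ?thesis .
qed

end

end

lemma cdf_range: "prob_space P \<Longrightarrow> cdf P X l \<in> {0..1}"
  unfolding cdf_def by (simp add: prob_space.prob_le_1)

lemma distortion_range: "distortion g \<Longrightarrow> x \<in> {0..1} \<Longrightarrow> g x \<in> {0..1}"
  unfolding distortion_def by blast

lemma mult_unit_interval: "(x :: real) \<in> {0..1} \<Longrightarrow> y \<in> {0..1} \<Longrightarrow> x * y \<in> {0..1}"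
  by (auto intro: mult_le_one)

context
  fixes Lbar :: real and g :: "real \<Rightarrow> real" and F R :: "real \<Rightarrow> real"
  assumes Lbar: "0 \<le> Lbar" and g: "distortion g" and F: "\<And>l. F l \<in> {0..1}"
begin

lemma one_minus_distortion_range: "1 - g (F l) \<in> {0..1}"
  using distortion_range[OF g F] by simp

lemma Unone_ge: "- Lbar \<le> Unone Lbar g F"
  using set_integral_Icc_unit_bounds[OF Lbar one_minus_distortion_range] unfolding Unone_def by simp

context
  assumes R: "retention Lbar R"
begin

lemma Uag_bounds: "- pr - Lbar \<le> Uag Lbar g F R pr" "Uag Lbar g F R pr \<le> - pr"
  using set_integral_Icc_unit_bounds[OF Lbar mult_unit_interval[OF one_minus_distortion_range
      rderiv_retention_bounds[OF R]]]
  unfolding Uag_def by simp_all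

lemma Vins_le_premium: "Vins Lbar g F R pr \<le> pr"
  using set_integral_Icc_unit_bounds[OF Lbar mult_unit_interval[OF one_minus_distortion_range]]
    rderiv_retention_bounds[OF R]
  unfolding Vins_def by simp

end

end

text \<open>
  F abstracts the loss distribution functions cdf P (L t), of which only the
  range [0,1] matters.
\<close>
locale IR_IC_menu = prob_space mu for mu :: "'t measure" +
  fixes Lbar :: real and F g :: "'t \<Rightarrow> real \<Rightarrow> real" and gIn :: "real \<Rightarrow> real"
    and R :: "'t \<Rightarrow> real \<Rightarrow> real" and pr :: "'t \<Rightarrow> real"
  assumes Lbar_nonneg: "0 \<le> Lbar"
    and F_range: "\<And>t l. t \<in> space mu \<Longrightarrow> F t l \<in> {0..1}"
    and g_distortion: "\<And>t. t \<in> space mu \<Longrightarrow> distortion (g t)"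
    and gIn_distortion: "distortion gIn"
    and R_retention: "\<And>t. t \<in> space mu \<Longrightarrow> retention Lbar (R t)"
    and agent_utility_measurable: "(\<lambda>t. Uag Lbar (g t) (F t) (R t) (pr t)) \<in> borel_measurable mu"
    and insurer_utility_integrable: "integrable mu (\<lambda>t. Vins Lbar gIn (F t) (R t) (pr t))"
    and agent_rational: "\<And>t. t \<in> space mu \<Longrightarrow> Unone Lbar (g t) (F t) \<le> Uag Lbar (g t) (F t) (R t) (pr t)"
    and insurer_rational: "0 \<le> (\<integral>t. Vins Lbar gIn (F t) (R t) (pr t) \<partial>mu)"
    and incentive_compatible: "\<And>t t'. t \<in> space mu \<Longrightarrow> t' \<in> space mu \<Longrightarrow>
      Uag Lbar (g t) (F t) (R t') (pr t') \<le> Uag Lbar (g t) (F t) (R t) (pr t)"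
begin

abbreviation agent_utility :: "'t \<Rightarrow> real" where
  "agent_utility t \<equiv> Uag Lbar (g t) (F t) (R t) (pr t)"

abbreviation insurer_value :: real where
  "insurer_value \<equiv> \<integral>t. Vins Lbar gIn (F t) (R t) (pr t) \<partial>mu"

lemma Uag_contract_bounds:
  assumes "t \<in> space mu" "t' \<in> space mu"
  shows "- pr t' - Lbar \<le> Uag Lbar (g t) (F t) (R t') (pr t')"
    and "Uag Lbar (g t) (F t) (R t') (pr t') \<le> - pr t'"
  by (intro Uag_bounds Lbar_nonneg g_distortion F_range R_retention assms)+

lemma agent_utility_bounds:
  assumes t: "t \<in> space mu"
  shows "- Lbar \<le> agent_utility t" "agent_utility t \<le> - pr t"
proof -
  have "- Lbar \<le> Unone Lbar (g t) (F t)"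
    by (intro Unone_ge Lbar_nonneg g_distortion F_range t)
  with agent_rational[OF t] show "- Lbar \<le> agent_utility t" by linarith
  show "agent_utility t \<le> - pr t" using Uag_contract_bounds(2)[OF t t] .
qed

lemma premium_le_Lbar: "t \<in> space mu \<Longrightarrow> pr t \<le> Lbar"
  using agent_utility_bounds by fastforce

lemma insurer_utility_le_premium: "t \<in> space mu \<Longrightarrow> Vins Lbar gIn (F t) (R t) (pr t) \<le> pr t"
  using Vins_le_premium[OF Lbar_nonneg gIn_distortion F_range R_retention] .

lemma premium_le_premium_add_Lbar:
  assumes "s \<in> space mu" "t \<in> space mu"
  shows "pr s \<le> pr t + Lbar"
  using incentive_compatible[OF assms] Uag_contract_bounds(2)[OF assms(1) assms(1)]
    Uag_contract_bounds(1)[OF assms]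
  by linarith

lemma insurer_value_le_Lbar: "insurer_value \<le> Lbar"
  using insurer_utility_le_premium premium_le_Lbar
  by (intro integral_le_const[OF insurer_utility_integrable] AE_I2) (fastforce intro: order_trans)

lemma premium_ge_neg_Lbar:
  assumes t: "t \<in> space mu"
  shows "- Lbar \<le> pr t"
proof -
  have "insurer_value \<le> pr t + Lbar"
    using insurer_utility_le_premium premium_le_premium_add_Lbar[OF _ t]
    by (intro integral_le_const[OF insurer_utility_integrable] AE_I2) (fastforce intro: order_trans)
  with insurer_rational show ?thesis by linarith
qed

lemma norm_utility_vector_le:
  assumes "t \<in> space mu"
  shows "norm (agent_utility t, insurer_value) \<le> 2 * Lbar"
proof -
  have "norm (agent_utility t, insurer_value) \<le> \<bar>agent_utility t\<bar> + \<bar>insurer_value\<bar>"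
    using norm_Pair_le[of "agent_utility t" insurer_value] by simp
  also have "\<dots> \<le> 2 * Lbar"
    using agent_utility_bounds[OF assms] premium_ge_neg_Lbar[OF assms]
      insurer_rational insurer_value_le_Lbar by linarith
  finally show ?thesis .
qed

lemma utility_vector_measurable: "(\<lambda>t. (agent_utility t, insurer_value)) \<in> borel_measurable mu"
  using agent_utility_measurable by measurable

end

theorem lemma1:
  fixes P :: "'a measure" and L :: "real \<Rightarrow> 'a \<Rightarrow> real" and Lbar :: real
    and tl tu :: real and q :: "real \<Rightarrow> real" and mu :: "real measure"
    and g :: "real \<Rightarrow> real \<Rightarrow> real" and gIn :: "real \<Rightarrow> real"
  assumes P: "prob_space P"
    and q_meas: "q \<in> borel_measurable lborel" and q_nonneg: "\<And>t. 0 \<le> q t"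
    and mu_def: "mu = density (restrict_space lborel {tl..tu}) (\<lambda>t. ennreal (q t))"
    and mu_prob: "prob_space mu"
    and L_meas: "\<And>t. t \<in> {tl..tu} \<Longrightarrow> L t \<in> borel_measurable P"
    and L_range: "\<And>t s. t \<in> {tl..tu} \<Longrightarrow> s \<in> space P \<Longrightarrow> L t s \<in> {0..Lbar}"
    and F_cont: "\<And>t. t \<in> {tl..tu} \<Longrightarrow> continuous_on UNIV (cdf P (L t))"
    and g_dist: "\<And>t. t \<in> {tl..tu} \<Longrightarrow> distortion (g t)"
    and gIn_dist: "distortion gIn"
  shows "\<exists>p M. 1 < p \<and>
    (\<forall>(R :: real \<Rightarrow> real \<Rightarrow> real) (pr :: real \<Rightarrow> real).
       (\<forall>t\<in>{tl..tu}. retention Lbar (R t))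
       \<and> integrable mu (\<lambda>t. Uag Lbar (g t) (cdf P (L t)) (R t) (pr t))
       \<and> integrable mu (\<lambda>t. Vins Lbar gIn (cdf P (L t)) (R t) (pr t))
       \<and> (\<forall>t\<in>{tl..tu}. Uag Lbar (g t) (cdf P (L t)) (R t) (pr t) \<ge> Unone Lbar (g t) (cdf P (L t)))
       \<and> (\<integral>t. Vins Lbar gIn (cdf P (L t)) (R t) (pr t) \<partial>mu) \<ge> 0
       \<and> (\<forall>t\<in>{tl..tu}. \<forall>t'\<in>{tl..tu}.
            Uag Lbar (g t) (cdf P (L t)) (R t) (pr t) \<ge> Uag Lbar (g t) (cdf P (L t)) (R t') (pr t'))
     \<longrightarrow> (let u = (\<lambda>t. (Uag Lbar (g t) (cdf P (L t)) (R t) (pr t),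
                       \<integral>s. Vins Lbar gIn (cdf P (L s)) (R s) (pr s) \<partial>mu))
          in u \<in> borel_measurable mu
             \<and> integrable mu (\<lambda>t. norm (u t) powr p)
             \<and> (\<integral>t. norm (u t) powr p \<partial>mu) powr (1 / p) \<le> M))"
proof -
  have space_mu: "space mu = {tl..tu}" unfolding mu_def by (simp add: space_restrict_space)
  then have "tl \<in> {tl..tu}" using prob_space.not_empty[OF mu_prob] by auto
  moreover obtain s where "s \<in> space P" using prob_space.not_empty[OF P] by blast
  ultimately have Lbar_nonneg: "0 \<le> Lbar" using L_range by fastforce
  show ?thesis
  proof (rule exI[of _ "2 :: real"], rule exI[of _ "2 * Lbar"], intro conjI allI impI, goal_cases)
    case 1
    show ?case by simp
  next
    case (2 R pr)
    interpret IR_IC_menu mu Lbar "\<lambda>t. cdf P (L t)" g gIn R pr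
      by (intro IR_IC_menu.intro[OF mu_prob] IR_IC_menu_axioms.intro)
        (use 2 in \<open>simp_all add: Lbar_nonneg cdf_range[OF P, simplified] space_mu g_dist gIn_dist borel_measurable_integrable\<close>)
    show ?case
      unfolding Let_def
      using utility_vector_measurable
        integrable_norm_powr_of_bounded[OF utility_vector_measurable norm_utility_vector_le, of 2]
        Lp_norm_le_of_bounded[OF utility_vector_measurable norm_utility_vector_le, of 2]
      by simp
  qed
qed

end
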